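(* Let $E$ be finite, $\Omega=E^{\mathbb{Z}}$ with left shift $S$, and let $\phi:\Omega\to\mathbb{R}$ be continuous with the extensibility property. Then for every pair $\xi,\eta\in\Omega$ such that $\{k\in\mathbb{Z}:\xi_k\ne\eta_k\}$ is finite, the sequence $\rho_n(\xi,\eta)=\sum_{i=-n}^{n}[\phi(S^i\xi)-\phi(S^i\eta)]$, $n\ge0$, converges; denote the limit by $\rho(\xi,\eta)$. Moreover: (1) $\rho$ is a cocycle: for all $\xi,\eta,\zeta\in\Omega$ with $\xi_i=\eta_i=\zeta_i$ for all but finitely many $i$, $\rho(\xi,\zeta)=\rho(\xi,\eta)+\rho(\eta,\zeta)$; (2) $\rho$ is translation-invariant: $\rho(\xi,\eta)=\rho(S\xi,S\eta)$ whenever $\{k:\xi_k\ne\eta_k\}$ is finite; (3) for every finite $\Lambda\subset\mathbb{Z}$ and all $\eta_\Lambda,\zeta_\Lambda\in E^\Lambda$, the map $\xi\mapsto\rho(\eta_\Lambda\xi_{\mathbb{Z}\setminus\Lambda},\zeta_\Lambda\xi_{\mathbb{Z}\setminus\Lambda})$ is continuous on $\Omega$.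
   Context: $E$ is finite with discrete topology, $\Omega=E^{\mathbb{Z}}$ has the product topology, $(S\omega)_i=\omega_{i+1}$. For $\omega\in\Omega$, $a\in E$, $\omega^a$ is the configuration equal to $a$ at site $0$ and to $\omega_k$ at $k\ne0$. A continuous $\phi$ has the extensibility property if for all $a,\tilde a\in E$ the functions $\sum_{i=-n}^{n}[\phi(S^i\omega^a)-\phi(S^i\omega^{\tilde a})]$ converge uniformly in $\omega\in\Omega$ as $n\to\infty$. For finite $\Lambda$, $\eta_\Lambda\xi_{\mathbb{Z}\setminus\Lambda}$ denotes the configuration equal to $\eta$ on $\Lambda$ and to $\xi$ off $\Lambda$. *)

theory Defs
  imports "HOL-Analysis.Analysis"
begin

definition Omega_top :: "(int \<Rightarrow> 'e) topology" where
  "Omega_top = product_topology (\<lambda>_. discrete_topology UNIV) UNIV"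

definition shift_pow :: "int \<Rightarrow> (int \<Rightarrow> 'e) \<Rightarrow> (int \<Rightarrow> 'e)" where
  "shift_pow i w = (\<lambda>k. w (k + i))"

definition shift :: "(int \<Rightarrow> 'e) \<Rightarrow> (int \<Rightarrow> 'e)" where
  "shift w = (\<lambda>k. w (k + 1))"

definition set0 :: "(int \<Rightarrow> 'e) \<Rightarrow> 'e \<Rightarrow> (int \<Rightarrow> 'e)" where
  "set0 w a = w(0 := a)"

definition extensible :: "((int \<Rightarrow> 'e) \<Rightarrow> real) \<Rightarrow> bool" where
  "extensible phi \<longleftrightarrow> (\<forall>a b. uniformly_convergent_on UNIV
      (\<lambda>(n::nat) w. \<Sum>i\<in>{- int n..int n}. phi (shift_pow i (set0 w a)) - phi (shift_pow i (set0 w b))))"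

definition rho_n :: "((int \<Rightarrow> 'e) \<Rightarrow> real) \<Rightarrow> (int \<Rightarrow> 'e) \<Rightarrow> (int \<Rightarrow> 'e) \<Rightarrow> nat \<Rightarrow> real" where
  "rho_n phi xi eta n = (\<Sum>i\<in>{- int n..int n}. phi (shift_pow i xi) - phi (shift_pow i eta))"

definition rho :: "((int \<Rightarrow> 'e) \<Rightarrow> real) \<Rightarrow> (int \<Rightarrow> 'e) \<Rightarrow> (int \<Rightarrow> 'e) \<Rightarrow> real" where
  "rho phi xi eta = lim (rho_n phi xi eta)"

definition glue :: "int set \<Rightarrow> (int \<Rightarrow> 'e) \<Rightarrow> (int \<Rightarrow> 'e) \<Rightarrow> (int \<Rightarrow> 'e)" where
  "glue L eta xi = (\<lambda>k. if k \<in> L then eta k else xi k)"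

end

theory Submission
  imports Defs
begin

text \<open>Since \<open>\<Omega>\<close> is compact, the continuous \<open>\<phi>\<close> depends uniformly on finitely many
  coordinates, so for configurations differing on a fixed finite set the terms
  \<open>\<phi>(S\<^sup>i x) - \<phi>(S\<^sup>i y)\<close> vanish as \<open>|i| \<rightarrow> \<infinity>\<close>, uniformly in the configurations. Hence
  re-indexing a symmetric partial sum \<open>\<Sum>\<^bsub>|i|\<le>n\<^esub>\<close> by a fixed shift only adds boundary terms
  that vanish uniformly. Extensibility is uniform convergence of \<open>\<rho>\<^sub>n\<close> for a change at site 0;
  re-indexing moves it to any single site, and the identity
  \<open>\<rho>\<^sub>n(x,z) = \<rho>\<^sub>n(x,y) + \<rho>\<^sub>n(y,z)\<close> extends it to changes on any finite set, still uniformly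
  in the configurations. Uniformity yields the continuity statement, and translation
  invariance is the shift-by-one case of the re-indexing.\<close>

lemma topspace_Omega_top [simp]: "topspace Omega_top = UNIV"
  by (simp add: Omega_top_def)

lemma compact_space_Omega_top: "compact_space (Omega_top :: (int \<Rightarrow> 'e::finite) topology)"
  by (simp add: Omega_top_def compact_space_product_topology compact_space_discrete_topology)

lemma openin_Omega_top_cylinder:
  assumes "finite F"
  shows "openin Omega_top {y. \<forall>i\<in>F. y i = x i}"
proof -
  have "{y. \<forall>i\<in>F. y i = x i} = Pi\<^sub>E UNIV (\<lambda>i. if i \<in> F then {x i} else UNIV)"
    by (auto simp: PiE_iff split: if_splits)
  moreover have "finite {i. (if i \<in> F then {x i} else UNIV) \<noteq> UNIV}"
    by (rule finite_subset[OF _ assms]) auto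
  ultimately show ?thesis
    by (simp add: Omega_top_def openin_PiE_gen)
qed

lemma continuous_map_Omega_top_local_window:
  assumes "continuous_map Omega_top euclideanreal phi" "e > 0"
  obtains F where "finite F" "\<And>y. \<forall>i\<in>F. y i = x i \<Longrightarrow> \<bar>phi y - phi x\<bar> < e"
proof -
  have "openin Omega_top {y \<in> topspace Omega_top. phi y \<in> ball (phi x) e}"
    using assms(1) by (rule openin_continuous_map_preimage) simp
  then have "openin (product_topology (\<lambda>_. discrete_topology UNIV) UNIV) {y. \<bar>phi y - phi x\<bar> < e}"
    by (simp add: Omega_top_def dist_real_def abs_minus_commute)
  then obtain U where U: "finite {i. U i \<noteq> UNIV}" "x \<in> Pi\<^sub>E UNIV U"
    "Pi\<^sub>E UNIV U \<subseteq> {y. \<bar>phi y - phi x\<bar> < e}"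
    unfolding openin_product_topology_alt using assms(2) by (auto dest!: spec[of _ x])
  show thesis
  proof (rule that[OF U(1)])
    fix y assume "\<forall>i\<in>{i. U i \<noteq> UNIV}. y i = x i"
    then have "y \<in> Pi\<^sub>E UNIV U"
      using U(2) by (auto simp: PiE_iff) (metis UNIV_I)
    then show "\<bar>phi y - phi x\<bar> < e"
      using U(3) by auto
  qed
qed

lemma continuous_map_Omega_top_uniform_window:
  fixes phi :: "(int \<Rightarrow> 'e::finite) \<Rightarrow> real"
  assumes cont: "continuous_map Omega_top euclideanreal phi" and "e > 0"
  obtains N where "\<And>x y. \<forall>k. \<bar>k\<bar> \<le> N \<longrightarrow> x k = y k \<Longrightarrow> \<bar>phi x - phi y\<bar> < e"
proof -
  have "\<exists>F. finite F \<and> (\<forall>y. (\<forall>i\<in>F. y i = x i) \<longrightarrow> \<bar>phi y - phi x\<bar> < e/2)" for x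
    by (rule continuous_map_Omega_top_local_window[OF cont, of "e/2" x]) (use \<open>e > 0\<close> in auto)
  then obtain F where F: "\<And>x. finite (F x)" "\<And>x y. \<forall>i\<in>F x. y i = x i \<Longrightarrow> \<bar>phi y - phi x\<bar> < e/2"
    by metis
  define cyl where "cyl x = {y. \<forall>i\<in>F x. y i = x i}" for x
  have "compactin Omega_top (UNIV :: (int \<Rightarrow> 'e) set)"
    and "\<forall>U\<in>cyl ` UNIV. openin Omega_top U" and "UNIV \<subseteq> \<Union>(cyl ` UNIV)"
    using compact_space_Omega_top openin_Omega_top_cylinder[OF F(1)]
    by (auto simp: compact_space_def cyl_def)
  then obtain C where C: "finite C" "UNIV \<subseteq> \<Union>(cyl ` C)"
    unfolding compactin_def by (metis finite_subset_image)
  have "bdd_above (abs ` \<Union>(F ` C))"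
    using C(1) F(1) by (intro bdd_above_finite) auto
  then obtain N where N: "\<And>c i. c \<in> C \<Longrightarrow> i \<in> F c \<Longrightarrow> \<bar>i\<bar> \<le> N"
    by (auto simp: bdd_above_def)
  show thesis
  proof (rule that)
    fix x y :: "int \<Rightarrow> 'e" assume agree: "\<forall>k. \<bar>k\<bar> \<le> N \<longrightarrow> x k = y k"
    obtain c where c: "c \<in> C" "x \<in> cyl c"
      using C(2) by blast
    then have "y \<in> cyl c"
      using agree N by (auto simp: cyl_def)
    with c have "\<bar>phi x - phi c\<bar> < e/2" "\<bar>phi y - phi c\<bar> < e/2"
      using F(2) by (auto simp: cyl_def)
    then show "\<bar>phi x - phi y\<bar> < e"
      by linarith
  qed
qed

lemma shift_pow_diff_vanishes:
  fixes phi :: "(int \<Rightarrow> 'e::finite) \<Rightarrow> real" and X Y :: "'c \<Rightarrow> int \<Rightarrow> 'e"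
  assumes cont: "continuous_map Omega_top euclideanreal phi"
    and "finite D" and agree: "\<And>c k. k \<notin> D \<Longrightarrow> X c k = Y c k"
  shows "uniform_limit C (\<lambda>i c. phi (shift_pow i (X c)) - phi (shift_pow i (Y c))) (\<lambda>_. 0) cofinite"
proof (rule uniform_limitI)
  fix e :: real assume "e > 0"
  then obtain N where N: "\<And>x y. \<forall>k. \<bar>k\<bar> \<le> N \<longrightarrow> x k = y k \<Longrightarrow> \<bar>phi x - phi y\<bar> < e"
    using continuous_map_Omega_top_uniform_window[OF cont] by blast
  have "{i. \<not> (\<forall>c\<in>C. dist (phi (shift_pow i (X c)) - phi (shift_pow i (Y c))) 0 < e)}
      \<subseteq> (\<lambda>(d, k). d - k) ` (D \<times> {-N..N})"
  proof
    fix i assume "i \<in> {i. \<not> (\<forall>c\<in>C. dist (phi (shift_pow i (X c)) - phi (shift_pow i (Y c))) 0 < e)}"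
    then obtain c where "\<not> \<bar>phi (shift_pow i (X c)) - phi (shift_pow i (Y c))\<bar> < e"
      by auto
    then obtain k where "\<bar>k\<bar> \<le> N" "k + i \<in> D"
      using N agree by (metis shift_pow_def)
    then show "i \<in> (\<lambda>(d, k). d - k) ` (D \<times> {-N..N})"
      by (intro image_eqI[of _ _ "(k + i, k)"]) auto
  qed
  moreover have "finite ((\<lambda>(d, k). d - k) ` (D \<times> {-N..N}))"
    using \<open>finite D\<close> by simp
  ultimately show "\<forall>\<^sub>F i in cofinite. \<forall>c\<in>C. dist (phi (shift_pow i (X c)) - phi (shift_pow i (Y c))) 0 < e"
    unfolding eventually_cofinite by (rule finite_subset)
qed

lemma filterlim_cofinite_inj: "inj f \<Longrightarrow> filterlim f cofinite cofinite"
  by (auto simp: filterlim_iff eventually_cofinite vimage_def dest: finite_vimageI)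

lemma sum_symmetric_interval_Suc:
  "(\<Sum>i\<in>{- int (Suc n)..int (Suc n)}. f i) = (\<Sum>i\<in>{- int n..int n}. f i) + f (- int (Suc n)) + f (int (Suc n))"
proof -
  have "{- int (Suc n)..int (Suc n)} = insert (- int (Suc n)) (insert (int (Suc n)) {- int n..int n})"
    by auto
  then show ?thesis
    by (simp add: algebra_simps)
qed

lemma sum_symmetric_interval_shift:
  fixes f :: "int \<Rightarrow> 'a::ab_group_add"
  shows "(\<Sum>i\<in>{- int n..int n}. f (i + 1)) = (\<Sum>i\<in>{- int n..int n}. f i) + (f (int n + 1) - f (- int n))"
proof (induction n)
  case (Suc n)
  show ?case
    unfolding sum_symmetric_interval_Suc Suc.IH by (simp add: algebra_simps)
qed simp

lemma uniform_limit_symmetric_boundary: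
  fixes G :: "int \<Rightarrow> 'c \<Rightarrow> real"
  assumes "uniform_limit C G (\<lambda>_. 0) cofinite"
  shows "uniform_limit C (\<lambda>n c. G (int n + 1) c - G (- int n) c) (\<lambda>_. 0) sequentially"
proof -
  have "inj (\<lambda>n::nat. int n + 1)" "inj (\<lambda>n::nat. - int n)"
    by (auto intro: injI)
  then have "uniform_limit C (\<lambda>n. G (int n + 1)) (\<lambda>_. 0) sequentially"
    "uniform_limit C (\<lambda>n. G (- int n)) (\<lambda>_. 0) sequentially"
    using filterlim_compose[OF assms filterlim_cofinite_inj] by (simp_all flip: cofinite_eq_sequentially)
  then show ?thesis
    using uniform_limit_minus by fastforce
qed

lemma uniform_limit_symmetric_sum_shift:
  fixes G :: "int \<Rightarrow> 'c \<Rightarrow> real"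
  assumes decay: "uniform_limit C G (\<lambda>_. 0) cofinite"
    and lim: "uniform_limit C (\<lambda>n c. \<Sum>i\<in>{- int n..int n}. G i c) l sequentially"
  shows "uniform_limit C (\<lambda>n c. \<Sum>i\<in>{- int n..int n}. G (i + t) c) l sequentially"
proof -
  have boundary: "uniform_limit C (\<lambda>n c. G (int n + 1 + s) c - G (- int n + s) c) (\<lambda>_. 0) sequentially"
    for s
  proof -
    have "inj (\<lambda>i. i + s)"
      by (auto intro: injI)
    from filterlim_compose[OF decay filterlim_cofinite_inj[OF this]]
    show ?thesis
      by (rule uniform_limit_symmetric_boundary)
  qed
  show ?thesis
  proof (induction t rule: int_induct[where k = 0])
    case base
    then show ?case using lim by simp
  next
    case (step1 t)
    have "(\<Sum>i\<in>{- int n..int n}. G (i + (t + 1)) c)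
        = (\<Sum>i\<in>{- int n..int n}. G (i + t) c) + (G (int n + 1 + t) c - G (- int n + t) c)" for n c
      using sum_symmetric_interval_shift[of "\<lambda>i. G (i + t) c" n] by (simp add: ac_simps)
    with uniform_limit_add[OF step1(2) boundary[of t]] show ?case
      by simp
  next
    case (step2 t)
    have "(\<Sum>i\<in>{- int n..int n}. G (i + (t - 1)) c)
        = (\<Sum>i\<in>{- int n..int n}. G (i + t) c) - (G (int n + 1 + (t - 1)) c - G (- int n + (t - 1)) c)"
      for n c
      using sum_symmetric_interval_shift[of "\<lambda>i. G (i + (t - 1)) c" n] by (simp add: algebra_simps)
    with uniform_limit_minus[OF step2(2) boundary[of "t - 1"]] show ?case
      by simp
  qed
qed

lemma extensible_uniformly_convergent:
  fixes phi :: "(int \<Rightarrow> 'e::finite) \<Rightarrow> real"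
  assumes "extensible phi"
  shows "uniformly_convergent_on UNIV (\<lambda>n (v, a, b). rho_n phi (set0 v a) (set0 v b) n)"
proof -
  let ?f = "\<lambda>n (v, a, b). rho_n phi (set0 v a) (set0 v b) n"
  have "uniform_limit (UNIV \<times> {ab}) ?f (\<lambda>p. lim (\<lambda>n. ?f n p)) sequentially" for ab :: "'e \<times> 'e"
  proof -
    obtain a b where ab: "ab = (a, b)"
      by fastforce
    have "uniform_limit UNIV (\<lambda>n v. rho_n phi (set0 v a) (set0 v b) n)
        (\<lambda>v. lim (\<lambda>n. rho_n phi (set0 v a) (set0 v b) n)) sequentially"
      using assms by (simp add: extensible_def rho_n_def uniformly_convergent_uniform_limit_iff)
    from uniform_limit_compose'[OF this, of fst "UNIV \<times> {ab}"] show ?thesis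
      by (rule uniform_limit_cong'[THEN iffD1, rotated 2]) (auto simp: ab)
  qed
  then have "uniform_limit (\<Union>ab. UNIV \<times> {ab}) ?f (\<lambda>p. lim (\<lambda>n. ?f n p)) sequentially"
    by (intro uniform_limit_on_UNION) auto
  moreover have "(\<Union>ab. UNIV \<times> {ab}) = (UNIV :: ((int \<Rightarrow> 'e) \<times> 'e \<times> 'e) set)"
    by auto
  ultimately show ?thesis
    by (auto intro: uniformly_convergentI)
qed

lemma shift_pow_fun_upd: "shift_pow i (w(j := a)) = shift_pow (i + - j) (set0 (shift_pow j w) a)"
  by (auto simp: shift_pow_def set0_def fun_eq_iff)

lemma uniformly_convergent_rho_n_single_site:
  fixes phi :: "(int \<Rightarrow> 'e::finite) \<Rightarrow> real" and X Y :: "'c \<Rightarrow> int \<Rightarrow> 'e"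
  assumes cont: "continuous_map Omega_top euclideanreal phi" and ext: "extensible phi"
    and agree: "\<And>c k. k \<noteq> j \<Longrightarrow> X c k = Y c k"
  shows "uniformly_convergent_on UNIV (\<lambda>n c. rho_n phi (X c) (Y c) n)"
proof -
  define G where "G i = (\<lambda>(v, a, b). phi (shift_pow i (set0 v a)) - phi (shift_pow i (set0 v b)))" for i
  have decay: "uniform_limit UNIV G (\<lambda>_. 0) cofinite"
    unfolding G_def case_prod_beta'
    by (rule shift_pow_diff_vanishes[OF cont, of "{0}"]) (auto simp: set0_def)
  obtain l where "uniform_limit UNIV (\<lambda>n p. \<Sum>i\<in>{- int n..int n}. G i p) l sequentially"
    using extensible_uniformly_convergent[OF ext]
    by (auto simp: uniformly_convergent_on_def rho_n_def G_def case_prod_beta')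
  from uniform_limit_symmetric_sum_shift[OF decay this, of "- j"]
  have "uniform_limit UNIV (\<lambda>n c. \<Sum>i\<in>{- int n..int n}. G (i + - j) (shift_pow j (X c), X c j, Y c j))
      (\<lambda>c. l (shift_pow j (X c), X c j, Y c j)) sequentially"
    by (rule uniform_limit_compose') simp
  moreover have "X c = (X c)(j := X c j)" "Y c = (X c)(j := Y c j)" for c
    using agree by auto
  then have "rho_n phi (X c) (Y c) n
      = (\<Sum>i\<in>{- int n..int n}. G (i + - j) (shift_pow j (X c), X c j, Y c j))" for n c
    unfolding rho_n_def G_def by (metis (no_types, lifting) shift_pow_fun_upd case_prod_conv)
  ultimately show ?thesis
    by (auto intro: uniformly_convergentI)
qed

lemma rho_n_cocycle: "rho_n phi xi zeta n = rho_n phi xi eta n + rho_n phi eta zeta n"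
  unfolding rho_n_def by (simp flip: sum.distrib)

lemma uniformly_convergent_rho_n:
  fixes phi :: "(int \<Rightarrow> 'e::finite) \<Rightarrow> real" and X Y :: "'c \<Rightarrow> int \<Rightarrow> 'e"
  assumes cont: "continuous_map Omega_top euclideanreal phi" and ext: "extensible phi"
    and "finite D" and "\<And>c k. k \<notin> D \<Longrightarrow> X c k = Y c k"
  shows "uniformly_convergent_on UNIV (\<lambda>n c. rho_n phi (X c) (Y c) n)"
  using assms(3,4)
proof (induction D arbitrary: X)
  case empty
  then have "X = Y"
    by auto
  then show ?case
    by (simp add: rho_n_def)
next
  case (insert j D)
  define Z where "Z c = (X c)(j := Y c j)" for c
  have "uniformly_convergent_on UNIV (\<lambda>n c. rho_n phi (X c) (Z c) n)"
    by (rule uniformly_convergent_rho_n_single_site[OF cont ext, where j = j]) (simp add: Z_def)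
  moreover have "uniformly_convergent_on UNIV (\<lambda>n c. rho_n phi (Z c) (Y c) n)"
    using insert.prems by (intro insert.IH) (auto simp: Z_def)
  ultimately have "uniformly_convergent_on UNIV (\<lambda>n c. rho_n phi (X c) (Z c) n + rho_n phi (Z c) (Y c) n)"
    by (rule uniformly_convergent_add)
  then show ?case
    by (simp flip: rho_n_cocycle)
qed

lemma rho_n_tendsto_rho:
  fixes phi :: "(int \<Rightarrow> 'e::finite) \<Rightarrow> real"
  assumes cont: "continuous_map Omega_top euclideanreal phi" and ext: "extensible phi"
    and "finite {k. xi k \<noteq> eta k}"
  shows "rho_n phi xi eta \<longlonglongrightarrow> rho phi xi eta"
proof -
  have "uniformly_convergent_on UNIV (\<lambda>n (_::unit). rho_n phi xi eta n)"
    using uniformly_convergent_rho_n[OF cont ext assms(3)] by auto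
  then have "convergent (rho_n phi xi eta)"
    by (auto dest: uniformly_convergent_imp_convergent)
  then show ?thesis
    by (simp add: rho_def convergent_LIMSEQ_iff)
qed

lemma rho_cocycle:
  fixes phi :: "(int \<Rightarrow> 'e::finite) \<Rightarrow> real"
  assumes cont: "continuous_map Omega_top euclideanreal phi" and ext: "extensible phi"
    and fin: "finite {i. xi i \<noteq> eta i \<or> eta i \<noteq> zeta i}"
  shows "rho phi xi zeta = rho phi xi eta + rho phi eta zeta"
proof -
  have "finite {k. xi k \<noteq> eta k}" "finite {k. eta k \<noteq> zeta k}" "finite {k. xi k \<noteq> zeta k}"
    by (auto intro: finite_subset[OF _ fin])
  then have "(\<lambda>n. rho_n phi xi eta n + rho_n phi eta zeta n) \<longlonglongrightarrow> rho phi xi eta + rho phi eta zeta"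
    by (intro tendsto_add rho_n_tendsto_rho[OF cont ext])
  then have "rho_n phi xi zeta \<longlonglongrightarrow> rho phi xi eta + rho phi eta zeta"
    by (simp flip: rho_n_cocycle)
  then show ?thesis
    by (simp add: rho_def limI)
qed

lemma rho_shift:
  fixes phi :: "(int \<Rightarrow> 'e::finite) \<Rightarrow> real"
  assumes cont: "continuous_map Omega_top euclideanreal phi" and ext: "extensible phi"
    and fin: "finite {k. xi k \<noteq> eta k}"
  shows "rho phi (shift xi) (shift eta) = rho phi xi eta"
proof -
  define d where "d i = phi (shift_pow i xi) - phi (shift_pow i eta)" for i
  have "uniform_limit {()} (\<lambda>i _. d i) (\<lambda>_. 0) cofinite"
    unfolding d_def using fin by (intro shift_pow_diff_vanishes[OF cont]) auto
  moreover have "uniform_limit {()} (\<lambda>n _. \<Sum>i\<in>{- int n..int n}. d i) (\<lambda>_. rho phi xi eta) sequentially"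
    using rho_n_tendsto_rho[OF cont ext fin] by (simp add: rho_n_def[abs_def] d_def)
  ultimately have "uniform_limit {()} (\<lambda>n _. \<Sum>i\<in>{- int n..int n}. d (i + 1)) (\<lambda>_. rho phi xi eta) sequentially"
    by (rule uniform_limit_symmetric_sum_shift)
  moreover have "shift_pow (i + 1) x = shift_pow i (shift x)" for i and x :: "int \<Rightarrow> 'e"
    by (simp add: shift_pow_def shift_def ac_simps)
  ultimately have "rho_n phi (shift xi) (shift eta) \<longlonglongrightarrow> rho phi xi eta"
    by (simp add: rho_n_def[abs_def] d_def)
  then show ?thesis
    by (simp add: rho_def limI)
qed

lemma continuous_map_shift_pow_glue:
  "continuous_map Omega_top Omega_top (\<lambda>xi. shift_pow i (glue L eta xi))"
  unfolding Omega_top_def shift_pow_def glue_def continuous_map_componentwise_UNIV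
proof
  fix k
  show "continuous_map (product_topology (\<lambda>_. discrete_topology UNIV) UNIV) (discrete_topology UNIV)
      (\<lambda>xi. if k + i \<in> L then eta (k + i) else xi (k + i))"
    using continuous_map_product_projection[of "k + i" UNIV "\<lambda>_. discrete_topology UNIV"]
    by (cases "k + i \<in> L") simp_all
qed

lemma continuous_map_lim_uniformly_convergent:
  fixes f :: "nat \<Rightarrow> 'a \<Rightarrow> real"
  assumes "\<And>n. continuous_map X euclideanreal (f n)" and "uniformly_convergent_on (topspace X) f"
  shows "continuous_map X euclideanreal (\<lambda>x. lim (\<lambda>n. f n x))"
proof -
  have "continuous_map X Met_TC.mtopology (\<lambda>x. lim (\<lambda>n. f n x))"
  proof (rule Met_TC.continuous_map_uniform_limit_alt)
    show "\<And>e. 0 < e \<Longrightarrow> \<forall>\<^sub>F n in sequentially. \<forall>x\<in>topspace X. dist (f n x) (lim (\<lambda>n. f n x)) < e"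
      using assms(2) by (simp add: uniformly_convergent_uniform_limit_iff uniform_limit_iff)
  qed (use assms(1) in auto)
  then show ?thesis
    by simp
qed

lemma continuous_map_rho_glue:
  fixes phi :: "(int \<Rightarrow> 'e::finite) \<Rightarrow> real"
  assumes cont: "continuous_map Omega_top euclideanreal phi" and ext: "extensible phi"
    and "finite L"
  shows "continuous_map Omega_top euclideanreal (\<lambda>xi. rho phi (glue L eta xi) (glue L zeta xi))"
  unfolding rho_def
proof (rule continuous_map_lim_uniformly_convergent)
  show "continuous_map Omega_top euclideanreal (\<lambda>xi. rho_n phi (glue L eta xi) (glue L zeta xi) n)" for n
    unfolding rho_n_def
    by (intro continuous_map_sum continuous_map_diff
        continuous_map_compose[OF continuous_map_shift_pow_glue cont, unfolded o_def]) auto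
  show "uniformly_convergent_on (topspace Omega_top) (\<lambda>n xi. rho_n phi (glue L eta xi) (glue L zeta xi) n)"
    using \<open>finite L\<close> by (simp add: glue_def uniformly_convergent_rho_n[OF cont ext])
qed

theorem proposition4p1:
  fixes phi :: "(int \<Rightarrow> 'e::finite) \<Rightarrow> real"
  assumes "continuous_map Omega_top euclideanreal phi"
    and "extensible phi"
  shows "(\<forall>xi eta. finite {k. xi k \<noteq> eta k} \<longrightarrow> convergent (rho_n phi xi eta))
    \<and> (\<forall>xi eta zeta. finite {i. xi i \<noteq> eta i \<or> eta i \<noteq> zeta i} \<longrightarrow>
          rho phi xi zeta = rho phi xi eta + rho phi eta zeta)
    \<and> (\<forall>xi eta. finite {k. xi k \<noteq> eta k} \<longrightarrow> rho phi xi eta = rho phi (shift xi) (shift eta))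
    \<and> (\<forall>L eta zeta. finite L \<longrightarrow>
          continuous_map Omega_top euclideanreal (\<lambda>xi. rho phi (glue L eta xi) (glue L zeta xi)))"
proof (intro conjI allI impI)
  fix xi eta :: "int \<Rightarrow> 'e"
  assume "finite {k. xi k \<noteq> eta k}"
  then show "convergent (rho_n phi xi eta)"
    using rho_n_tendsto_rho[OF assms] by (auto simp: convergent_def)
next
  fix xi eta zeta :: "int \<Rightarrow> 'e"
  assume "finite {i. xi i \<noteq> eta i \<or> eta i \<noteq> zeta i}"
  then show "rho phi xi zeta = rho phi xi eta + rho phi eta zeta"
    by (rule rho_cocycle[OF assms])
next
  fix xi eta :: "int \<Rightarrow> 'e"
  assume "finite {k. xi k \<noteq> eta k}"
  then show "rho phi xi eta = rho phi (shift xi) (shift eta)"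
    using rho_shift[OF assms] by simp
next
  fix L :: "int set" and eta zeta :: "int \<Rightarrow> 'e"
  assume "finite L"
  then show "continuous_map Omega_top euclideanreal (\<lambda>xi. rho phi (glue L eta xi) (glue L zeta xi))"
    by (rule continuous_map_rho_glue[OF assms])
qed

end
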